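(* Let $n\ge2$ and let $\mathsf{T}$ be a string of length $n$ over $\{\mathtt{a},\mathtt{b}\}$ ($\mathtt{a}<\mathtt{b}$) whose suffix array $P=[p_1,\ldots,p_n]$ is an arithmetically progressed permutation with ratio $k$, with $P\neq[n,n-1,\ldots,1]$ and $p_1\neq k+1$. Then $\mathsf{T}$ is a balanced word.
   Context: Lexicographic order with a proper prefix smaller than the longer string; suffix array: permutation of $[1..n]$ such that $\mathsf{T}[\mathsf{SA}_{\mathsf{T}}[i]..n]$ is the $i$-th smallest suffix. $x\bmod n$: representative in $[1..n]$. An arithmetically progressed permutation of length $n$ with ratio $k\in[1..n-1]$ is a permutation $P$ of $[1..n]$ with $P[i+1]=P[i]+k\bmod n$. A binary string $\mathsf{T}$ is balanced if for every character $c\in\{\mathtt{a},\mathtt{b}\}$ and all pairs of equal-length factors $\mathsf{U},\mathsf{V}$ of the infinite periodic string $\mathsf{T}\mathsf{T}\mathsf{T}\cdots$, the numbers of occurrences of $c$ in $\mathsf{U}$ and in $\mathsf{V}$ differ by at most one. *)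

theory Defs
  imports Main
begin

datatype letter = a | b

definition letter_less :: "(letter \<times> letter) set" where
  "letter_less = {(a, b)}"

text \<open>Lexicographic order on strings; a proper prefix is smaller (this is how lexord behaves).\<close>
definition str_less :: "letter list \<Rightarrow> letter list \<Rightarrow> bool" where
  "str_less U V \<longleftrightarrow> (U, V) \<in> lexord letter_less"

text \<open>The suffix T[i..n] for 1-based i.\<close>
definition suf :: "letter list \<Rightarrow> nat \<Rightarrow> letter list" where
  "suf T i = drop (i - 1) T"

definition is_suffix_array :: "letter list \<Rightarrow> nat list \<Rightarrow> bool" where
  "is_suffix_array T SA \<longleftrightarrow>
     length SA = length T \<and> set SA = {1..length T} \<and> distinct SA \<and>
     (\<forall>i j. i < j \<and> j < length SA \<longrightarrow> str_less (suf T (SA ! i)) (suf T (SA ! j)))"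

text \<open>x mod n with representative in [1..n].\<close>
definition mod1 :: "nat \<Rightarrow> nat \<Rightarrow> nat" where
  "mod1 x n = (x + n - 1) mod n + 1"

definition is_permutation :: "nat \<Rightarrow> nat list \<Rightarrow> bool" where
  "is_permutation n P \<longleftrightarrow> length P = n \<and> distinct P \<and> set P = {1..n}"

definition is_APP :: "nat \<Rightarrow> nat \<Rightarrow> nat list \<Rightarrow> bool" where
  "is_APP n k P \<longleftrightarrow> is_permutation n P \<and> 1 \<le> k \<and> k \<le> n - 1 \<and>
     (\<forall>i. i + 1 < n \<longrightarrow> P ! (i + 1) = mod1 (P ! i + k) n)"

text \<open>Number of occurrences of c in the length-m factor of TTT... starting at (0-based) position i.\<close>
definition occ_inf :: "letter list \<Rightarrow> letter \<Rightarrow> nat \<Rightarrow> nat \<Rightarrow> nat" where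
  "occ_inf T c i m = card {j. j < m \<and> T ! ((i + j) mod length T) = c}"

definition balanced :: "letter list \<Rightarrow> bool" where
  "balanced T \<longleftrightarrow>
     (\<forall>c i j m. occ_inf T c i m \<le> occ_inf T c j m + 1)"

end

theory Submission
  imports Defs "HOL-Number_Theory.Cong"
begin

text \<open>Let \<open>pos x\<close> be the (0-based) starting position of the \<open>x\<close>-th smallest suffix, so
\<open>pos x = pos 0 + x k mod n\<close>, and let \<open>d\<close> be the inverse of \<open>k\<close> modulo \<open>n\<close>. Moving the starting
position one step to the right then adds \<open>d\<close> to the rank modulo \<open>n\<close>. Suffixes starting with
\<open>a\<close> come first, and suffixes with a common first letter are ordered like their tails, except
that the suffix of length one is the smallest one with its letter. Comparing ranks that do and
do not wrap around under \<open>x \<mapsto> x + d\<close>, and using that \<open>T\<close> itself is not the largest suffix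
(this is the hypothesis \<open>p\<^sub>1 \<noteq> k + 1\<close>), one finds \<open>m + d = n\<close> for the number \<open>m\<close> of letters
\<open>a\<close>. So the rank \<open>r p\<close> of position \<open>p\<close> satisfies \<open>r (p + 1) + m = r p + n [T p = a]\<close>:
\<open>T\<close> is the coding of a rotation by \<open>-m\<close> on \<open>n\<close> points. Summing over a factor of length \<open>l\<close>
gives \<open>n |U|\<^sub>a = l m + r(end) - r(start)\<close> with ranks in \<open>[0, n)\<close>, whence balance.\<close>

lemma str_less_Cons_Cons:
  "str_less (x # xs) (y # ys) \<longleftrightarrow> x = a \<and> y = b \<or> x = y \<and> str_less xs ys"
  by (auto simp: str_less_def letter_less_def)

lemma str_less_drop_drop:
  assumes "p < length T" "q < length T"
  shows "str_less (drop p T) (drop q T) \<longleftrightarrow>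
    T ! p = a \<and> T ! q = b \<or> T ! p = T ! q \<and> str_less (drop (Suc p) T) (drop (Suc q) T)"
  using assms by (metis Cons_nth_drop_Suc str_less_Cons_Cons)

lemma str_less_irrefl: "\<not> str_less xs xs"
  unfolding str_less_def by (rule lexord_irreflexive) (auto simp: letter_less_def)

lemma str_less_trans: "str_less xs ys \<Longrightarrow> str_less ys zs \<Longrightarrow> str_less xs zs"
  unfolding str_less_def by (rule lexord_trans) (auto simp: letter_less_def trans_def)

lemma not_str_less_Nil: "\<not> str_less xs []"
  by (simp add: str_less_def)

lemma occ_inf_0 [simp]: "occ_inf T c i 0 = 0"
  by (simp add: occ_inf_def)

lemma occ_inf_Suc:
  "occ_inf T c i (Suc l) = occ_inf T c i l + (if T ! ((i + l) mod length T) = c then 1 else 0)"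
proof -
  have "{j. j < Suc l \<and> T ! ((i + j) mod length T) = c} =
    (if T ! ((i + l) mod length T) = c then insert l else id) {j. j < l \<and> T ! ((i + j) mod length T) = c}"
    by (auto simp: less_Suc_eq)
  then show ?thesis by (simp add: occ_inf_def)
qed

lemma occ_inf_a_plus_b: "occ_inf T a i l + occ_inf T b i l = l"
  by (induction l) (auto simp: occ_inf_Suc intro: letter.exhaust)

lemma balanced_if_balanced_a:
  assumes "\<And>i j l. occ_inf T a i l \<le> occ_inf T a j l + 1"
  shows "balanced T"
  unfolding balanced_def
proof (intro allI)
  fix c i j l
  show "occ_inf T c i l \<le> occ_inf T c j l + 1"
  proof (cases c)
    case a then show ?thesis using assms by simp
  next
    case b then show ?thesis
      using assms[of j l i] occ_inf_a_plus_b[of T i l] occ_inf_a_plus_b[of T j l] by simp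
  qed
qed

lemma balanced_if_rank_recurrence:
  fixes T :: "letter list" and R :: "nat \<Rightarrow> nat"
  assumes len: "length T = n" and "0 < n"
    and R_less: "\<And>p. p < n \<Longrightarrow> R p < n"
    and R_step: "\<And>p. p < n \<Longrightarrow> R ((p + 1) mod n) + m = R p + (if T ! p = a then n else 0)"
  shows "balanced T"
proof (rule balanced_if_balanced_a)
  have count: "R ((i + l) mod n) + l * m = R (i mod n) + n * occ_inf T a i l" for i l
  proof (induction l)
    case (Suc l)
    have "((i + l) mod n + 1) mod n = (i + Suc l) mod n" by (simp add: mod_simps)
    then show ?case
      using Suc R_step[of "(i + l) mod n"] \<open>0 < n\<close> by (auto simp: occ_inf_Suc len algebra_simps)
  qed simp
  fix i j l
  have R_mod_less: "R (q mod n) < n" for q using R_less \<open>0 < n\<close> by simp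
  have "n * occ_inf T a i l < n * (occ_inf T a j l + 2)"
    using count[of i l] count[of j l] R_mod_less[of "i + l"] R_mod_less[of j] by (simp add: algebra_simps)
  then show "occ_inf T a i l \<le> occ_inf T a j l + 1"
    by (simp only: mult_less_cancel1) simp
qed

lemma APP_nth_bounds:
  assumes "is_APP n k P" "x < n"
  shows "1 \<le> P ! x" "P ! x \<le> n"
  using assms nth_mem[of x P] by (auto simp: is_APP_def is_permutation_def)

lemma APP_nth_pred:
  assumes "is_APP n k P" "x < n"
  shows "P ! x - 1 = (P ! 0 - 1 + x * k) mod n"
  using assms(2)
proof (induction x)
  case 0
  then show ?case using APP_nth_bounds[OF assms(1), of 0] by simp
next
  case (Suc x)
  have step: "P ! Suc x = (P ! x + k + n - 1) mod n + 1"
    using assms(1) Suc.prems by (simp add: is_APP_def mod1_def)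
  have "P ! x + k + n - 1 = (P ! x - 1) + k + n"
    using APP_nth_bounds(1)[OF assms(1), of x] Suc.prems by simp
  then have "P ! Suc x - 1 = ((P ! x - 1) + k) mod n"
    using step by simp
  also have "\<dots> = (P ! 0 - 1 + Suc x * k) mod n"
    using Suc by (simp add: mod_simps ac_simps)
  finally show ?case .
qed

lemma APP_ratio_invertible:
  assumes "is_APP n k P" "2 \<le> n"
  shows "\<exists>d < n. d * k mod n = 1"
proof -
  have "(P ! 0 - 1 + 1) mod n + 1 \<in> set P"
    using assms by (simp add: is_APP_def is_permutation_def Suc_le_eq)
  then obtain d where d: "d < n" "P ! d = (P ! 0 - 1 + 1) mod n + 1"
    using assms(1) by (auto simp: in_set_conv_nth is_APP_def is_permutation_def)
  then have "[P ! 0 - 1 + d * k = P ! 0 - 1 + 1] (mod n)"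
    using APP_nth_pred[OF assms(1) d(1)] by (simp add: cong_def)
  then have "[d * k = 1] (mod n)"
    using cong_add_lcancel_nat[of "P ! 0 - 1" "d * k" 1 n] by simp
  then show ?thesis
    using d(1) assms(2) by (auto simp: cong_def)
qed

locale APP_suffix_array =
  fixes T :: "letter list" and P :: "nat list" and n k :: nat
  assumes two_le_n: "2 \<le> n"
    and length_T: "length T = n"
    and suffix_array: "is_suffix_array T P"
    and APP: "is_APP n k P"
    and first_ne_ratio_Suc: "P ! 0 \<noteq> k + 1"
begin

definition pos :: "nat \<Rightarrow> nat" where
  "pos x = P ! x - 1"

definition rank :: "nat \<Rightarrow> nat" where
  "rank p = (THE x. x < n \<and> pos x = p)"

definition ratio_inverse :: nat where
  "ratio_inverse = (SOME d. d < n \<and> d * k mod n = 1)"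

definition letter :: "nat \<Rightarrow> letter" where
  "letter x = T ! pos x"

text \<open>The rank of the smallest suffix starting with \<open>b\<close>; as these come last, it is the number
  of letters \<open>a\<close> in \<open>T\<close>.\<close>
definition a_count :: nat where
  "a_count = (LEAST x. x = n \<or> letter x = b)"

lemma pos_less: "x < n \<Longrightarrow> pos x < n"
  using APP_nth_bounds[OF APP, of x] unfolding pos_def by linarith

lemma pos_eq: "x < n \<Longrightarrow> pos x = (pos 0 + x * k) mod n"
  unfolding pos_def by (rule APP_nth_pred[OF APP])

lemma pos_inj:
  assumes "x < n" "y < n" "pos x = pos y"
  shows "x = y"
proof -
  have "P ! x = P ! y"
    using assms APP_nth_bounds[OF APP, of x] APP_nth_bounds[OF APP, of y] unfolding pos_def by linarith
  then show ?thesis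
    using assms APP by (simp add: is_APP_def is_permutation_def nth_eq_iff_index_eq)
qed

lemma pos_surj: "p < n \<Longrightarrow> \<exists>x < n. pos x = p"
proof -
  assume "p < n"
  then have "p + 1 \<in> set P" using APP by (simp add: is_APP_def is_permutation_def)
  then show ?thesis using APP by (auto simp: in_set_conv_nth pos_def is_APP_def is_permutation_def)
qed

lemma rank_less: "p < n \<Longrightarrow> rank p < n"
  and pos_rank: "p < n \<Longrightarrow> pos (rank p) = p"
proof -
  have "rank p < n \<and> pos (rank p) = p" if "p < n" for p
    unfolding rank_def by (rule theI') (use that pos_surj pos_inj in blast)
  then show "p < n \<Longrightarrow> rank p < n" "p < n \<Longrightarrow> pos (rank p) = p"
    by auto
qed

lemma rank_pos: "x < n \<Longrightarrow> rank (pos x) = x"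
  unfolding rank_def by (rule the_equality) (auto intro: pos_inj)

lemma ratio_inverse_less: "ratio_inverse < n"
  and ratio_inverse_mult: "ratio_inverse * k mod n = 1"
  using someI_ex[OF APP_ratio_invertible[OF APP two_le_n]] unfolding ratio_inverse_def by auto

lemma ratio_inverse_pos: "0 < ratio_inverse"
  using ratio_inverse_mult by (cases ratio_inverse) auto

lemma pos_add_ratio_inverse:
  assumes "x < n"
  shows "pos ((x + ratio_inverse) mod n) = Suc (pos x) mod n"
proof -
  have "pos ((x + ratio_inverse) mod n) = (pos 0 + (x + ratio_inverse) mod n * k) mod n"
    by (rule pos_eq) (use two_le_n in simp)
  also have "\<dots> = (pos 0 + (x + ratio_inverse) * k) mod n"
    by (metis mod_add_right_eq mod_mult_left_eq)
  also have "\<dots> = (pos 0 + x * k + ratio_inverse * k) mod n"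
    by (simp add: algebra_simps)
  also have "\<dots> = ((pos 0 + x * k) mod n + ratio_inverse * k mod n) mod n"
    by (rule mod_add_eq[symmetric])
  also have "\<dots> = Suc (pos x) mod n"
    using pos_eq[OF assms] ratio_inverse_mult by simp
  finally show ?thesis .
qed

lemma rank_Suc:
  assumes "p < n"
  shows "rank (Suc p mod n) = (rank p + ratio_inverse) mod n"
proof -
  have "Suc p mod n = pos ((rank p + ratio_inverse) mod n)"
    using pos_add_ratio_inverse rank_less[OF assms] pos_rank[OF assms] by simp
  then show ?thesis
    using rank_pos two_le_n by simp
qed

lemma suffix_less: "x < y \<Longrightarrow> y < n \<Longrightarrow> str_less (drop (pos x) T) (drop (pos y) T)"
  using suffix_array length_T unfolding is_suffix_array_def suf_def pos_def by auto

lemma letter_b_upward: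
  assumes "x \<le> y" "y < n" "letter x = b"
  shows "letter y = b"
proof (cases "x = y")
  case False
  then have "str_less (drop (pos x) T) (drop (pos y) T)"
    using assms suffix_less by simp
  then show ?thesis
    using assms str_less_drop_drop[of "pos x" T "pos y"] pos_less length_T
    unfolding letter_def by simp
qed (use assms in simp)

lemma letter_a_iff: "x < n \<Longrightarrow> letter x = a \<longleftrightarrow> x < a_count"
proof
  assume x: "x < n" "letter x = a"
  have "a_count = n \<or> letter a_count = b"
    unfolding a_count_def by (rule LeastI[of _ n]) simp
  then show "x < a_count"
    using x letter_b_upward[of a_count x] by (cases "a_count \<le> x") auto
next
  assume "x < a_count"
  then show "letter x = a"
    using not_less_Least[of x "\<lambda>x. x = n \<or> letter x = b"] unfolding a_count_def
    by (metis letter.exhaust)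
qed

lemma a_count_le: "a_count \<le> n"
  unfolding a_count_def by (rule Least_le) simp

lemma same_letter_tail_less:
  assumes "x < y" "y < n" "letter x = letter y"
  shows "str_less (drop (Suc (pos x)) T) (drop (Suc (pos y)) T)"
  using assms suffix_less[OF assms(1,2)] str_less_drop_drop[of "pos x" T "pos y"] pos_less length_T
  unfolding letter_def by (auto simp: str_less_irrefl)

lemma same_letter_not_last_position:
  assumes "x < y" "y < n" "letter x = letter y"
  shows "pos y \<noteq> n - 1"
proof
  assume "pos y = n - 1"
  then have "drop (Suc (pos y)) T = []"
    using length_T by simp
  then show False
    using same_letter_tail_less[OF assms] not_str_less_Nil by simp
qed

lemma rank_last_position: "rank (n - 1) = (if T ! (n - 1) = a then 0 else a_count)"
proof -
  define z where "z = rank (n - 1)"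
  have z: "z < n" "pos z = n - 1"
    using rank_less[of "n - 1"] pos_rank[of "n - 1"] two_le_n unfolding z_def by auto
  have letter_z: "letter z = T ! (n - 1)"
    using z by (simp add: letter_def)
  show ?thesis
  proof (cases "T ! (n - 1) = a")
    case True
    then have "\<not> 0 < z"
      using z letter_z letter_a_iff[of 0] letter_a_iff[of z] same_letter_not_last_position[of 0 z]
      by auto
    then show ?thesis using True z_def by simp
  next
    case False
    then have "letter z = b" "a_count \<le> z"
      using z letter_z letter_a_iff[of z] by (auto intro: letter.exhaust)
    moreover have "\<not> a_count < z"
      using z calculation letter_a_iff[of a_count] same_letter_not_last_position[of a_count z]
      by (auto intro: letter.exhaust)
    ultimately show ?thesis using False z_def by simp
  qed
qed

lemma same_letter_no_wrap:
  assumes "x < y" "y < n" "letter x = letter y" "x \<noteq> rank (n - 1)"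
  shows "x + ratio_inverse < n \<longleftrightarrow> y + ratio_inverse < n"
proof (rule ccontr)
  assume wrap: "\<not> (x + ratio_inverse < n \<longleftrightarrow> y + ratio_inverse < n)"
  have "pos x \<noteq> n - 1" "pos y \<noteq> n - 1"
    using assms rank_pos[of x] same_letter_not_last_position[OF assms(1-3)] by auto
  then have "pos ((x + ratio_inverse) mod n) = Suc (pos x)"
    "pos ((y + ratio_inverse) mod n) = Suc (pos y)"
    using assms pos_less[of x] pos_less[of y] pos_add_ratio_inverse by auto
  moreover have "(y + ratio_inverse) mod n < (x + ratio_inverse) mod n"
    using wrap assms ratio_inverse_less by (auto simp: le_mod_geq)
  ultimately have "str_less (drop (Suc (pos y)) T) (drop (Suc (pos x)) T)"
    using suffix_less[of "(y + ratio_inverse) mod n" "(x + ratio_inverse) mod n"] two_le_n by simp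
  then show False
    using same_letter_tail_less[OF assms(1-3)] str_less_trans str_less_irrefl by blast
qed

lemma rank_0_not_largest: "rank 0 \<noteq> n - 1"
proof
  assume "rank 0 = n - 1"
  then have last: "pos (n - 1) = 0"
    using pos_rank[of 0] two_le_n by auto
  have "pos 0 = (pos 0 + n * k) mod n"
    using pos_less[of 0] two_le_n by simp
  also have "\<dots> = (pos 0 + (n - 1) * k + k) mod n"
    using two_le_n by (cases n) (auto simp: algebra_simps)
  also have "\<dots> = ((pos 0 + (n - 1) * k) mod n + k) mod n"
    by (simp add: mod_add_left_eq)
  also have "\<dots> = k"
    using last pos_eq[of "n - 1"] APP two_le_n by (auto simp: is_APP_def)
  finally show False
    using first_ne_ratio_Suc APP_nth_bounds(1)[OF APP, of 0] two_le_n unfolding pos_def by simp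
qed

lemma rank_0: "rank 0 = (rank (n - 1) + ratio_inverse) mod n"
  using rank_Suc[of "n - 1"] two_le_n by simp

lemma a_count_add_ratio_inverse_le: "a_count + ratio_inverse \<le> n"
proof (rule ccontr)
  assume wrap: "\<not> a_count + ratio_inverse \<le> n"
  have below: "letter x = a" if "x < a_count" for x
    using that letter_a_iff[of x] a_count_le by simp
  then obtain x where x: "x < a_count - 1" "letter x = a" "letter (a_count - 1) = a"
    "x \<noteq> rank (n - 1)" "x + ratio_inverse < n"
  proof (cases "T ! (n - 1) = a")
    case True
    then have "ratio_inverse \<noteq> n - 1"
      using rank_0 rank_0_not_largest rank_last_position ratio_inverse_less by simp
    then show ?thesis
      using that[of 1] wrap True rank_last_position ratio_inverse_less below
      by auto
  next
    case False
    then show ?thesis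
      using that[of 0] wrap rank_last_position ratio_inverse_less ratio_inverse_pos
        below by auto
  qed
  then show False
    using same_letter_no_wrap[of x "a_count - 1"] wrap a_count_le by auto
qed

lemma a_count_add_ratio_inverse_ge: "n \<le> a_count + ratio_inverse"
proof (rule ccontr)
  assume no_wrap: "\<not> n \<le> a_count + ratio_inverse"
  have above: "letter x = b" if "a_count \<le> x" "x < n" for x
    using that letter_a_iff[of x] by (auto intro: letter.exhaust)
  then obtain x where x: "x < n - 1" "letter x = b" "letter (n - 1) = b"
    "x \<noteq> rank (n - 1)" "x + ratio_inverse < n"
  proof (cases "T ! (n - 1) = a")
    case True
    then have "0 < a_count"
      using rank_last_position letter_a_iff[of 0] two_le_n rank_less[of "n - 1"] pos_rank[of "n - 1"]
      by (simp add: letter_def)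
    then show ?thesis
      using that[of a_count] no_wrap True rank_last_position ratio_inverse_pos two_le_n
        above by auto
  next
    case False
    then have "a_count + ratio_inverse \<noteq> n - 1"
      using rank_0 rank_0_not_largest rank_last_position no_wrap by simp
    then show ?thesis
      using that[of "a_count + 1"] no_wrap False rank_last_position ratio_inverse_pos two_le_n
        above by auto
  qed
  then show False
    using same_letter_no_wrap[of x "n - 1"] two_le_n ratio_inverse_pos by auto
qed

lemma a_count_add_ratio_inverse: "a_count + ratio_inverse = n"
  using a_count_add_ratio_inverse_le a_count_add_ratio_inverse_ge by simp

lemma rank_recurrence:
  assumes "p < n"
  shows "rank (Suc p mod n) + a_count = rank p + (if T ! p = a then n else 0)"
proof -
  have "T ! p = a \<longleftrightarrow> rank p < a_count"
    using rank_less[OF assms] pos_rank[OF assms] letter_a_iff[of "rank p"] unfolding letter_def by auto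
  then show ?thesis
    using rank_Suc[OF assms] rank_less[OF assms] pos_rank[OF assms]
      a_count_add_ratio_inverse
    by (auto simp: le_mod_geq)
qed

lemma balanced: "balanced T"
  using length_T two_le_n rank_less rank_recurrence
  by (intro balanced_if_rank_recurrence[of T n rank a_count]) auto

end

theorem mainTheorem15:
  fixes T :: "letter list" and P :: "nat list" and n k :: nat
  assumes "n \<ge> 2"
    and "length T = n"
    and "is_suffix_array T P"
    and "is_APP n k P"
    and "P \<noteq> rev [1..<n+1]"
    and "P ! 0 \<noteq> k + 1"
  shows "balanced T"
proof -
  interpret APP_suffix_array T P n k
    using assms(1-4,6) by unfold_locales
  show ?thesis
    by (rule balanced)
qed

end
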